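(* For all integers $n\geq 0$ and $i\geq 1$, $$\bar a_{3i+2}(3n+2)\equiv 0 \pmod 6,\qquad \bar a_{9i+5}(9n+3)\equiv 0 \pmod{12},\qquad \bar a_{9i+8}(9n+3)\equiv 0 \pmod{12}.$$
   Context: For $|q|<1$ and integers $m\geq 1$, write $f_m:=\prod_{j\geq 1}(1-q^{jm})$. For an integer $c\geq 1$, the generalized overcubic partition function $\bar a_c(n)$ is defined by $$\sum_{n\geq 0}\bar a_c(n)q^n=\frac{f_4^{c-1}}{f_1^2f_2^{2c-3}}.$$ *)

theory Defs
  imports "HOL-Computational_Algebra.Formal_Power_Series"
begin

(* f_m = prod_{j>=1} (1 - q^(j m)) as a formal power series over the rationals.
   For m >= 1 the k-th coefficient of the infinite product equals the k-th
   coefficient of the finite product over 1 <= j <= k (factors with j > k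
   only affect coefficients of index > k). *)
definition eta_fps :: "nat \<Rightarrow> rat fps" where
  "eta_fps m = Abs_fps (\<lambda>k. fps_nth (\<Prod>j\<in>{1..k}. (1 - fps_X ^ (j * m))) k)"

(* generating function  f_4^(c-1) / (f_1^2 f_2^(2c-3))
   written as f_4^(c-1) * f_2^3 / (f_1^2 * f_2^(2c)) to avoid negative exponents *)
definition overcubic_gf :: "nat \<Rightarrow> rat fps" where
  "overcubic_gf c = eta_fps 4 ^ (c - 1) * eta_fps 2 ^ 3
                      * inverse (eta_fps 1 ^ 2 * eta_fps 2 ^ (2 * c))"

definition abar :: "nat \<Rightarrow> nat \<Rightarrow> rat" where
  "abar c n = fps_nth (overcubic_gf c) n"

end

(*
  By Gauss's identities phi(q) = f_2^5 / (f_1^2 f_4^2) and phi(-q) = f_1^2 / f_2 for the theta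
  series phi(q) = sum_{d in Z} q^(d^2), the generating function is phi(q) / phi(-q^2)^(c+1).
  Both identities follow from a finite form of Jacobi's triple product, an instance of the
  q-binomial theorem.

  Modulo 2 both theta series are 1, so every coefficient of positive index is even.  Writing
  1/phi(-q^2) = 1 + b with b even, (1 + b)^(c+1) = 1 + (c+1) b modulo 4, hence the coefficient of
  q^t is divisible by 4 whenever neither phi(q) nor phi(-q^2) has a term q^t; this is the case for
  t = 9n + 3, which is neither a square nor twice a square modulo 9.

  Modulo 3, the Frobenius congruence f_m^3 = f_(3m) gives phi(-q^s)^3 = phi(-q^(3s)).  For
  c + 1 = 3(i+1), 9(i+1) and 9i + 6 the generating function is therefore congruent to phi(q), resp.
  phi(q) phi(-q^6), times a power series in q^3, resp. q^9.  Squares are never 2 modulo 3 and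
  k^2 + 6 l^2 is never 3 modulo 9, so the coefficients of q^(3n+2), resp. q^(9n+3), vanish mod 3.
*)
theory Submission
  imports Defs
begin

unbundle fps_syntax

section \<open>Power series agreeing up to a given order\<close>

definition eq_upto :: "nat \<Rightarrow> 'a fps \<Rightarrow> 'a fps \<Rightarrow> bool" where
  "eq_upto T a b \<longleftrightarrow> (\<forall>k\<le>T. a $ k = b $ k)"

lemma eq_upto_refl [simp]: "eq_upto T a a"
  by (simp add: eq_upto_def)

lemma eq_upto_sym: "eq_upto T a b \<Longrightarrow> eq_upto T b a"
  by (simp add: eq_upto_def)

lemma eq_upto_trans: "eq_upto T a b \<Longrightarrow> eq_upto T b c \<Longrightarrow> eq_upto T a c"
  by (simp add: eq_upto_def)

lemma eq_upto_diff:
  "eq_upto T a b \<Longrightarrow> eq_upto T c d \<Longrightarrow> eq_upto T (a - c) (b - d :: 'a :: group_add fps)"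
  by (simp add: eq_upto_def)

lemma eq_upto_mult:
  "eq_upto T a b \<Longrightarrow> eq_upto T c d \<Longrightarrow> eq_upto T (a * c) (b * d :: 'a :: comm_ring_1 fps)"
  unfolding eq_upto_def fps_mult_nth by (auto intro!: sum.cong)

lemma eq_upto_power: "eq_upto T a b \<Longrightarrow> eq_upto T (a ^ k) (b ^ k :: 'a :: comm_ring_1 fps)"
  by (induction k) (auto intro: eq_upto_mult)

lemma eq_upto_sum:
  "(\<And>i. i \<in> A \<Longrightarrow> eq_upto T (f i) (g i)) \<Longrightarrow> eq_upto T (sum f A) (sum g A :: 'a :: comm_monoid_add fps)"
  unfolding eq_upto_def fps_sum_nth by (auto intro!: sum.cong)

lemma eq_upto_inverse:
  fixes a b :: "'a :: field fps"
  assumes "eq_upto T a b" and "a $ 0 \<noteq> 0"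
  shows "eq_upto T (inverse a) (inverse b)"
proof -
  have "b $ 0 \<noteq> 0"
    using assms by (simp add: eq_upto_def)
  then have "inverse a * b * inverse b = inverse a"
    by (simp add: mult.assoc inverse_mult_eq_1')
  moreover have "inverse a * a * inverse b = inverse b"
    using assms(2) by (simp add: inverse_mult_eq_1)
  moreover have "eq_upto T (inverse a * b * inverse b) (inverse a * a * inverse b)"
    using assms(1) by (intro eq_upto_mult eq_upto_refl) (simp add: eq_upto_sym)
  ultimately show ?thesis
    by metis
qed

lemma eq_upto_X_power_mult: "T < k \<Longrightarrow> eq_upto T (fps_X ^ k * a) 0"
  by (simp add: eq_upto_def fps_X_power_mult_nth)

lemma fps_eq_if_eq_upto: "(\<And>T. eq_upto T a b) \<Longrightarrow> a = b"
  unfolding eq_upto_def by (intro fps_ext) blast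

definition qpochhammer :: "'a :: comm_ring_1 \<Rightarrow> nat \<Rightarrow> 'a" where
  "qpochhammer p k = (\<Prod>j\<in>{1..k}. 1 - p ^ j)"

lemma qpochhammer_0 [simp]: "qpochhammer p 0 = 1"
  by (simp add: qpochhammer_def)

lemma qpochhammer_Suc: "qpochhammer p (Suc k) = qpochhammer p k * (1 - p ^ Suc k)"
  unfolding qpochhammer_def by (simp add: prod.nat_ivl_Suc' mult.commute)

lemma qpochhammer_X_power_nth_0 [simp]: "m \<ge> 1 \<Longrightarrow> qpochhammer (fps_X ^ m) K $ 0 = 1"
  by (induction K) (simp_all add: qpochhammer_Suc flip: power_mult)

lemma eq_upto_qpochhammer_X_power:
  assumes "m \<ge> 1" and "T \<le> K"
  shows "eq_upto T (qpochhammer (fps_X ^ m) K) (qpochhammer (fps_X ^ m) T :: 'a :: comm_ring_1 fps)"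
  using assms(2)
proof (induction K rule: dec_induct)
  case (step K)
  have "Suc K \<le> m * Suc K"
    using mult_le_mono1[OF assms(1), of "Suc K"] by (simp only: mult_1)
  then have "T < m * Suc K"
    using step.hyps by linarith
  then have "eq_upto T (fps_X ^ (m * Suc K) * 1) (0 :: 'a fps)"
    by (rule eq_upto_X_power_mult)
  then have "eq_upto T ((fps_X ^ m) ^ Suc K) (0 :: 'a fps)"
    by (simp only: power_mult mult_1_right)
  then have "eq_upto T (1 - (fps_X ^ m) ^ Suc K) (1 - 0 :: 'a fps)"
    by (rule eq_upto_diff[OF eq_upto_refl])
  then have "eq_upto T (qpochhammer (fps_X ^ m) K * (1 - (fps_X ^ m) ^ Suc K))
      (qpochhammer (fps_X ^ m) T * (1 - 0) :: 'a fps)"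
    by (rule eq_upto_mult[OF step.IH])
  then show ?case
    by (simp add: qpochhammer_Suc)
qed simp

lemma eta_fps_nth: "eta_fps m $ k = qpochhammer (fps_X ^ m) k $ k"
  by (simp add: eta_fps_def qpochhammer_def mult.commute flip: power_mult)

lemma eta_fps_nth_0 [simp]: "eta_fps m $ 0 = 1"
  by (simp add: eta_fps_nth)

lemma eq_upto_eta_fps:
  assumes "m \<ge> 1" and "T \<le> K"
  shows "eq_upto T (eta_fps m) (qpochhammer (fps_X ^ m) K)"
proof -
  have "qpochhammer (fps_X ^ m) K $ k = (qpochhammer (fps_X ^ m) k :: rat fps) $ k" if "k \<le> T" for k
    using eq_upto_qpochhammer_X_power[OF assms(1), of k K, where 'a = rat] that assms(2)
    by (simp add: eq_upto_def)
  then show ?thesis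
    by (simp add: eq_upto_def eta_fps_nth)
qed

section \<open>Gaussian binomial coefficients\<close>

fun qbinomial :: "'a :: comm_ring_1 \<Rightarrow> nat \<Rightarrow> nat \<Rightarrow> 'a" where
  "qbinomial p N 0 = 1"
| "qbinomial p 0 (Suc m) = 0"
| "qbinomial p (Suc N) (Suc m) = qbinomial p N (Suc m) + p ^ (N - m) * qbinomial p N m"

lemma qbinomial_eq_0: "N < m \<Longrightarrow> qbinomial p N m = 0"
  by (induction p N m rule: qbinomial.induct) auto

lemma qbinomial_same [simp]: "qbinomial p N N = 1"
  by (induction N) (auto simp: qbinomial_eq_0)

lemma Suc_choose_two: "Suc m choose 2 = (m choose 2) + m"
  by (simp add: numeral_2_eq_2)

lemma choose_two_double: "2 * (m choose 2) + m = m * m"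
  by (induction m) (simp_all add: Suc_choose_two)

theorem qbinomial_theorem:
  fixes p x y :: "'a :: comm_ring_1"
  shows "(\<Prod>j<N. y + x * p ^ j) = (\<Sum>m\<le>N. p ^ (m choose 2) * qbinomial p N m * x ^ m * y ^ (N - m))"
proof (induction N)
  case (Suc N)
  define a where "a m = p ^ (m choose 2) * qbinomial p N m * x ^ m" for m
  define b where "b m = p ^ (Suc m choose 2) * (p ^ (N - m) * qbinomial p N m) * x ^ Suc m" for m
  have b: "a m * (x * p ^ N) = b m" if "m \<le> N" for m
  proof -
    have "p ^ (m choose 2) * p ^ N = p ^ (Suc m choose 2) * p ^ (N - m)"
      using that by (simp add: Suc_choose_two flip: power_add)
    then show ?thesis
      unfolding a_def b_def by (simp add: ac_simps)
  qed
  have "(\<Prod>j<Suc N. y + x * p ^ j) = (\<Sum>m\<le>N. a m * y ^ (N - m)) * (y + x * p ^ N)"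
    using Suc by (simp add: a_def)
  also have "\<dots> = (\<Sum>m\<le>N. a m * y ^ (Suc N - m)) + (\<Sum>m\<le>N. b m * y ^ (N - m))"
    unfolding distrib_left sum_distrib_right
    by (intro arg_cong2[where f = "(+)"] sum.cong refl)
      (simp_all add: Suc_diff_le b[symmetric] ac_simps)
  also have "(\<Sum>m\<le>N. a m * y ^ (Suc N - m)) = (\<Sum>m\<le>Suc N. a m * y ^ (Suc N - m))"
    by (simp add: a_def qbinomial_eq_0)
  also have "\<dots> = y ^ Suc N + (\<Sum>m\<le>N. a (Suc m) * y ^ (N - m))"
    by (subst sum.atMost_Suc_shift) (simp add: a_def numeral_2_eq_2)
  also have "y ^ Suc N + (\<Sum>m\<le>N. a (Suc m) * y ^ (N - m)) + (\<Sum>m\<le>N. b m * y ^ (N - m))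
      = (\<Sum>m\<le>Suc N. p ^ (m choose 2) * qbinomial p (Suc N) m * x ^ m * y ^ (Suc N - m))"
    by (subst sum.atMost_Suc_shift) (simp add: a_def b_def sum.distrib algebra_simps numeral_2_eq_2)
  finally show ?case .
qed (simp add: numeral_2_eq_2)

theorem qbinomial_mult_qpochhammer:
  "m \<le> N \<Longrightarrow> qbinomial p N m * qpochhammer p m * qpochhammer p (N - m) = qpochhammer p N"
proof (induction N arbitrary: m)
  case (Suc N)
  show ?case
  proof (cases m)
    case (Suc k)
    show ?thesis
    proof (cases "k = N")
      case False
      then have "k < N"
        using Suc \<open>m \<le> Suc N\<close> by simp
      define d where "d = N - Suc k"
      have IH1: "qbinomial p N (Suc k) * qpochhammer p (Suc k) * qpochhammer p d = qpochhammer p N"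
        using Suc.IH[of "Suc k"] \<open>k < N\<close> by (simp add: d_def)
      have IH2: "qbinomial p N k * qpochhammer p k * qpochhammer p (Suc d) = qpochhammer p N"
        using Suc.IH[of k] \<open>k < N\<close> by (simp add: d_def Suc_diff_Suc)
      have "qbinomial p (Suc N) m * qpochhammer p m * qpochhammer p (Suc N - m)
          = (qbinomial p N (Suc k) + p ^ Suc d * qbinomial p N k) * qpochhammer p (Suc k) * qpochhammer p (Suc d)"
        using Suc \<open>k < N\<close> by (simp add: d_def Suc_diff_Suc)
      also have "\<dots> = (qbinomial p N (Suc k) * qpochhammer p (Suc k) * qpochhammer p d) * (1 - p ^ Suc d)
          + p ^ Suc d * (qbinomial p N k * qpochhammer p k * qpochhammer p (Suc d)) * (1 - p ^ Suc k)"
        by (simp add: qpochhammer_Suc algebra_simps)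
      also have "\<dots> = qpochhammer p N * (1 - p ^ (Suc d + Suc k))"
        unfolding IH1 IH2 by (simp add: power_add algebra_simps)
      also have "Suc d + Suc k = Suc N"
        using \<open>k < N\<close> by (simp add: d_def)
      finally show ?thesis
        by (simp add: qpochhammer_Suc)
    qed (use Suc in \<open>simp add: qbinomial_eq_0\<close>)
  qed simp
qed simp

section \<open>A finite Jacobi triple product\<close>

definition odd_prod :: "'a :: comm_ring_1 \<Rightarrow> nat \<Rightarrow> nat \<Rightarrow> 'a fps" where
  "odd_prod e s n = (\<Prod>j<n. 1 + fps_const e * fps_X ^ (s * (2 * j + 1)))"

lemma prod_lower_half_eq_odd_prod:
  fixes e :: "'a :: comm_ring_1"
  assumes "e * e = 1"
  shows "(\<Prod>j<n. fps_X ^ (2 * s * n) + fps_const e * fps_X ^ (s * (2 * j + 1)))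
    = fps_const (e ^ n) * fps_X ^ (s * n * n) * odd_prod e s n"
proof -
  define g where "g i = 1 + fps_const e * fps_X ^ (s * (2 * i + 1))" for i
  have factor: "fps_X ^ (2 * s * n) + fps_const e * fps_X ^ (s * (2 * j + 1))
      = fps_const e * fps_X ^ (s * (2 * j + 1)) * g (n - Suc j)" if "j < n" for j
  proof -
    have "2 * j + 1 + (2 * (n - Suc j) + 1) = 2 * n"
      using that by simp
    then have exp: "s * (2 * j + 1) + s * (2 * (n - Suc j) + 1) = 2 * s * n"
      by (simp only: add_mult_distrib2[symmetric])
    have "c * fps_X ^ a * (1 + c * fps_X ^ b) = c * fps_X ^ a + (c * c) * (fps_X :: 'a fps) ^ (a + b)"
      for c :: "'a fps" and a b :: nat
      by (simp add: power_add algebra_simps)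
    from this[of "fps_const e" "s * (2 * j + 1)" "s * (2 * (n - Suc j) + 1)", unfolded exp]
    show ?thesis
      using assms by (simp add: g_def add.commute)
  qed
  have "(\<Prod>j<n. fps_X ^ (s * (2 * j + 1))) = (fps_X :: 'a fps) ^ (s * n * n)"
  proof -
    have "(\<Sum>j<n. s * (2 * j + 1)) = s * n * n"
      by (induction n) (simp_all add: algebra_simps)
    then show ?thesis
      by (simp flip: power_sum)
  qed
  moreover have "(\<Prod>j<n. g (n - Suc j)) = odd_prod e s n"
    unfolding prod.nat_diff_reindex by (simp add: odd_prod_def g_def)
  moreover have "(\<Prod>j<n. fps_X ^ (2 * s * n) + fps_const e * fps_X ^ (s * (2 * j + 1)))
      = (\<Prod>j<n. fps_const e) * (\<Prod>j<n. fps_X ^ (s * (2 * j + 1))) * (\<Prod>j<n. g (n - Suc j))"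
    unfolding prod.distrib[symmetric] by (intro prod.cong refl factor) simp
  ultimately show ?thesis
    by simp
qed

lemma prod_upper_half_eq_odd_prod:
  "(\<Prod>j<n. fps_X ^ (2 * s * n) + fps_const e * fps_X ^ (s * (2 * (n + j) + 1)))
    = fps_X ^ (2 * s * n * n) * odd_prod e s n"
proof -
  have "fps_X ^ (2 * s * n) + fps_const e * fps_X ^ (s * (2 * (n + j) + 1))
      = fps_X ^ (2 * s * n) * (1 + fps_const e * fps_X ^ (s * (2 * j + 1)))" for j
  proof -
    have "s * (2 * (n + j) + 1) = 2 * s * n + s * (2 * j + 1)"
      by (simp add: algebra_simps)
    then show ?thesis
      by (simp add: power_add algebra_simps)
  qed
  then show ?thesis
    by (simp add: odd_prod_def prod.distrib power_mult flip: power_mult)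
qed

definition absdiff :: "nat \<Rightarrow> nat \<Rightarrow> nat" where
  "absdiff m n = (if m \<le> n then n - m else m - n)"

lemma square_add_eq_absdiff:
  assumes "m \<le> 2 * n"
  shows "m * m + 2 * n * (2 * n - m) = 3 * n * n + absdiff n m ^ 2"
proof (cases "m \<le> n")
  case True
  then obtain D where "n = m + D"
    using le_Suc_ex by blast
  then show ?thesis
    by (simp add: absdiff_def power2_eq_square algebra_simps)
next
  case False
  then obtain D where m: "m = n + D"
    using le_Suc_ex nat_le_linear by blast
  with assms obtain r where "n = D + r"
    using le_Suc_ex by fastforce
  with m False show ?thesis
    by (simp add: absdiff_def power2_eq_square algebra_simps)
qed

lemma power_absdiff:
  assumes "e * e = (1 :: 'a :: comm_monoid_mult)"
  shows "e ^ n * e ^ m = e ^ absdiff n m"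
proof -
  have inv: "e ^ k * e ^ k = 1" for k
    using assms by (simp flip: power_mult_distrib)
  show ?thesis
  proof (cases "n \<le> m")
    case True
    then obtain k where "m = n + k"
      using le_Suc_ex by blast
    then show ?thesis
      by (simp add: absdiff_def power_add inv flip: mult.assoc)
  next
    case False
    then obtain k where "n = m + k"
      using le_Suc_ex nat_le_linear by blast
    moreover have "e ^ (m + k) * e ^ m = e ^ k * (e ^ m * e ^ m)"
      by (simp add: power_add ac_simps)
    ultimately show ?thesis
      using False by (simp add: absdiff_def inv)
  qed
qed

lemma prod_eq_odd_prod_square:
  fixes e :: "'a :: comm_ring_1"
  assumes "e * e = 1"
  shows "(\<Prod>j<2 * n. fps_X ^ (2 * s * n) + (fps_const e * fps_X ^ s) * (fps_X ^ (2 * s)) ^ j)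
    = fps_X ^ (3 * s * n * n) * (fps_const (e ^ n) * odd_prod e s n ^ 2)"
proof -
  define F where "F j = fps_X ^ (2 * s * n) + fps_const e * fps_X ^ (s * (2 * j + 1))" for j
  have prod_add: "(\<Prod>j<n + k. F j) = (\<Prod>j<n. F j) * (\<Prod>j<k. F (n + j))" for k
    by (induction k) (simp_all add: mult.assoc)
  have "(fps_const e * fps_X ^ s) * (fps_X ^ (2 * s)) ^ j = fps_const e * (fps_X :: 'a fps) ^ (s * (2 * j + 1))" for j
    by (simp add: algebra_simps flip: power_mult power_add)
  moreover have "{..<2 * n} = {..<n + n}"
    by simp
  ultimately have "(\<Prod>j<2 * n. fps_X ^ (2 * s * n) + (fps_const e * fps_X ^ s) * (fps_X ^ (2 * s)) ^ j)
      = (\<Prod>j<n + n. F j)"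
    by (simp only: F_def)
  also have "\<dots> = (fps_const (e ^ n) * fps_X ^ (s * n * n) * odd_prod e s n) * (fps_X ^ (2 * s * n * n) * odd_prod e s n)"
    unfolding prod_add unfolding F_def prod_lower_half_eq_odd_prod[OF assms] prod_upper_half_eq_odd_prod ..
  also have "\<dots> = fps_const (e ^ n) * (fps_X ^ (s * n * n) * fps_X ^ (2 * s * n * n)) * odd_prod e s n ^ 2"
    by (simp only: power2_eq_square ac_simps)
  also have "fps_X ^ (s * n * n) * fps_X ^ (2 * s * n * n) = (fps_X :: 'a fps) ^ (3 * s * n * n)"
    by (simp flip: power_add)
  finally show ?thesis
    by (simp only: ac_simps)
qed

lemma qbinomial_summand_eq_absdiff:
  fixes e :: "'a :: comm_ring_1"
  assumes "m \<le> 2 * n"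
  shows "(fps_X ^ (2 * s)) ^ (m choose 2) * G * (fps_const e * fps_X ^ s) ^ m * (fps_X ^ (2 * s * n)) ^ (2 * n - m)
    = fps_X ^ (3 * s * n * n) * (fps_const (e ^ m) * fps_X ^ (s * absdiff n m ^ 2) * G)"
proof -
  have "2 * s * (m choose 2) + s * m + 2 * s * n * (2 * n - m)
      = s * ((2 * (m choose 2) + m) + 2 * n * (2 * n - m))"
    by (simp add: algebra_simps)
  also have "\<dots> = s * (3 * n * n + absdiff n m ^ 2)"
    unfolding choose_two_double square_add_eq_absdiff[OF assms] ..
  also have "\<dots> = 3 * s * n * n + s * absdiff n m ^ 2"
    by (simp add: algebra_simps)
  finally show ?thesis
    by (simp add: power_mult_distrib ac_simps flip: power_mult power_add)
qed

(* The q-binomial theorem with p = q^(2s), x = e q^s and y = q^(2sn), divided by q^(3sn^2). *)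
theorem finite_jacobi_triple_product:
  fixes e :: "'a :: idom"
  assumes e: "e * e = 1"
  shows "odd_prod e s n ^ 2 = (\<Sum>m\<le>2 * n. fps_const (e ^ absdiff n m) * fps_X ^ (s * absdiff n m ^ 2)
           * qbinomial (fps_X ^ (2 * s)) (2 * n) m)"
proof -
  let ?G = "\<lambda>m. qbinomial ((fps_X :: 'a fps) ^ (2 * s)) (2 * n) m"
  have "fps_X ^ (3 * s * n * n) * (fps_const (e ^ n) * odd_prod e s n ^ 2)
      = fps_X ^ (3 * s * n * n) * (\<Sum>m\<le>2 * n. fps_const (e ^ m) * fps_X ^ (s * absdiff n m ^ 2) * ?G m)"
    unfolding prod_eq_odd_prod_square[OF e, symmetric] qbinomial_theorem sum_distrib_left
    by (intro sum.cong refl qbinomial_summand_eq_absdiff) simp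
  then have H: "fps_const (e ^ n) * odd_prod e s n ^ 2
      = (\<Sum>m\<le>2 * n. fps_const (e ^ m) * fps_X ^ (s * absdiff n m ^ 2) * ?G m)"
    by simp
  have "e ^ n * e ^ n = 1"
    using power_absdiff[OF e, of n n] by (simp add: absdiff_def)
  then have "odd_prod e s n ^ 2 = fps_const (e ^ n) * (fps_const (e ^ n) * odd_prod e s n ^ 2)"
    by (simp flip: mult.assoc)
  also have "\<dots> = (\<Sum>m\<le>2 * n. fps_const (e ^ n) * (fps_const (e ^ m) * fps_X ^ (s * absdiff n m ^ 2) * ?G m))"
    unfolding H sum_distrib_left ..
  also have "\<dots> = (\<Sum>m\<le>2 * n. fps_const (e ^ absdiff n m) * fps_X ^ (s * absdiff n m ^ 2) * ?G m)"
    by (intro sum.cong refl) (simp add: power_absdiff[OF e] flip: mult.assoc)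
  finally show ?thesis .
qed

section \<open>Theta series as eta quotients\<close>

(* theta e s = sum over d in Z of e^|d| q^(s d^2); for e = 1 and e = -1 these are phi(q^s) and phi(-q^s). *)
definition theta :: "'a :: comm_ring_1 \<Rightarrow> nat \<Rightarrow> 'a fps" where
  "theta e s = Abs_fps (\<lambda>t. of_bool (t = 0) + 2 * (\<Sum>d=1..t. if s * d ^ 2 = t then e ^ d else 0))"

lemma theta_nth:
  "theta e s $ t = of_bool (t = 0) + 2 * (\<Sum>d=1..t. if s * d ^ 2 = t then e ^ d else 0)"
  by (simp add: theta_def)

lemma sum_absdiff:
  fixes f :: "nat \<Rightarrow> 'a :: comm_semiring_1"
  shows "(\<Sum>m\<le>2 * n. f (absdiff n m)) = f 0 + 2 * (\<Sum>d=1..n. f d)"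
proof -
  have "{..2 * n} = {..<n} \<union> {n..n + n}"
    by auto
  then have "(\<Sum>m\<le>2 * n. f (absdiff n m)) = (\<Sum>m\<in>{..<n} \<union> {n..n + n}. f (absdiff n m))"
    by simp
  also have "\<dots> = (\<Sum>m<n. f (absdiff n m)) + (\<Sum>m=n..n + n. f (absdiff n m))"
    by (rule sum.union_disjoint) auto
  also have "(\<Sum>m<n. f (absdiff n m)) = (\<Sum>i<n. f (n - i))"
    by (intro sum.cong) (auto simp: absdiff_def)
  also have "\<dots> = (\<Sum>i<n. f (n - (n - Suc i)))"
    by (rule sum.nat_diff_reindex[symmetric])
  also have "\<dots> = (\<Sum>i<n. f (Suc i))"
    by (intro sum.cong) auto
  also have "\<dots> = (\<Sum>d=1..n. f d)"
    by (rule sum_bounds_lt_plus1)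
  also have "(\<Sum>m=n..n + n. f (absdiff n m)) = (\<Sum>d=0..n. f d)"
    using sum.shift_bounds_cl_nat_ivl[of "\<lambda>m. f (absdiff n m)" 0 n n] by (simp add: absdiff_def)
  also have "\<dots> = f 0 + (\<Sum>d=1..n. f d)"
    by (simp add: sum.atLeast_Suc_atMost)
  finally show ?thesis
    by (simp add: mult_2 ac_simps)
qed

lemma le_mult_square:
  fixes s d :: nat
  assumes "s \<ge> 1"
  shows "d \<le> s * d ^ 2"
proof -
  have "d \<le> d * d"
    by (cases d) simp_all
  also have "\<dots> \<le> s * (d * d)"
    using mult_le_mono1[OF assms, of "d * d"] by simp
  finally show ?thesis
    by (simp add: power2_eq_square)
qed

lemma eq_upto_qbinomial_mult_eta_fps:
  assumes "k \<ge> 1" and "m \<le> N" and "T \<le> m" and "T \<le> N - m"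
  shows "eq_upto T (qbinomial (fps_X ^ k) N m * eta_fps k) 1"
proof -
  let ?P = "qpochhammer (fps_X ^ k) :: nat \<Rightarrow> rat fps"
  let ?E = "eta_fps k" and ?G = "qbinomial (fps_X ^ k) N m"
  have "eq_upto T (?G * ?P m * ?P (N - m)) (?G * ?E * ?E)"
    using eq_upto_eta_fps[OF assms(1)] assms(3,4) by (intro eq_upto_mult eq_upto_refl) (simp_all add: eq_upto_sym)
  moreover have "eq_upto T (?P N) ?E"
    using eq_upto_eta_fps[OF assms(1), of T N] assms(2,3) by (simp add: eq_upto_sym)
  ultimately have "eq_upto T (?G * ?E * ?E) ?E"
    unfolding qbinomial_mult_qpochhammer[OF assms(2)] by (meson eq_upto_sym eq_upto_trans)
  then have "eq_upto T (?G * ?E * ?E * inverse ?E) (?E * inverse ?E)"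
    by (rule eq_upto_mult) simp
  moreover have "?E * inverse ?E = 1"
    by (simp add: inverse_mult_eq_1')
  ultimately show ?thesis
    by (simp add: mult.assoc)
qed

lemma eq_upto_eta_fps_mult_summand:
  fixes e :: rat
  assumes "s \<ge> 1" and "m \<le> 2 * n" and "2 * T \<le> n" and "d = absdiff n m"
  shows "eq_upto T (eta_fps (2 * s) * (fps_const (e ^ d) * fps_X ^ (s * d ^ 2) * qbinomial (fps_X ^ (2 * s)) (2 * n) m))
    (if d \<le> T then fps_const (e ^ d) * fps_X ^ (s * d ^ 2) else 0)"
proof (cases "d \<le> T")
  case True
  then have "T \<le> m" and "T \<le> 2 * n - m"
    using assms(2-4) by (auto simp: absdiff_def split: if_splits)
  then have "eq_upto T (qbinomial (fps_X ^ (2 * s)) (2 * n) m * eta_fps (2 * s)) 1"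
    using assms(1,2) by (intro eq_upto_qbinomial_mult_eta_fps) simp_all
  then have "eq_upto T (fps_const (e ^ d) * fps_X ^ (s * d ^ 2) * (qbinomial (fps_X ^ (2 * s)) (2 * n) m * eta_fps (2 * s)))
      (fps_const (e ^ d) * fps_X ^ (s * d ^ 2) * 1)"
    by (intro eq_upto_mult eq_upto_refl)
  then show ?thesis
    using True by (simp add: ac_simps)
next
  case False
  then have "T < s * d ^ 2"
    using le_mult_square[OF assms(1), of d] by linarith
  then have "eq_upto T (fps_X ^ (s * d ^ 2) * (eta_fps (2 * s) * fps_const (e ^ d) * qbinomial (fps_X ^ (2 * s)) (2 * n) m)) 0"
    by (rule eq_upto_X_power_mult)
  then show ?thesis
    using False by (simp add: ac_simps)
qed

lemma eq_upto_sum_absdiff_theta: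
  fixes e :: "'a :: comm_ring_1"
  assumes "s \<ge> 1" and "T \<le> n"
  shows "eq_upto T (\<Sum>m\<le>2 * n. if absdiff n m \<le> T then fps_const (e ^ absdiff n m) * fps_X ^ (s * absdiff n m ^ 2) else 0)
    (theta e s)"
  unfolding sum_absdiff[where f = "\<lambda>d. if d \<le> T then fps_const (e ^ d) * fps_X ^ (s * d ^ 2) else 0"] eq_upto_def
proof (intro allI impI)
  fix t assume "t \<le> T"
  define h where "h d = (if d \<le> T then fps_const (e ^ d) * fps_X ^ (s * d ^ 2) else 0)" for d
  have h: "h d $ t = (if s * d ^ 2 = t then e ^ d else 0)" for d
    using \<open>t \<le> T\<close> le_mult_square[OF assms(1), of d] by (auto simp: h_def)
  have "(\<Sum>d=1..n. h d) $ t = (\<Sum>d=1..t. if s * d ^ 2 = t then e ^ d else 0)"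
    unfolding fps_sum_nth
  proof (intro sum.mono_neutral_cong_right ballI)
    show "{1..t} \<subseteq> {1..n}"
      using \<open>t \<le> T\<close> assms(2) by auto
    show "h d $ t = 0" if "d \<in> {1..n} - {1..t}" for d
      using that le_mult_square[OF assms(1), of d] h by auto
  qed (simp_all add: h)
  then show "(h 0 + 2 * (\<Sum>d=1..n. h d)) $ t = theta e s $ t"
    by (simp add: theta_nth h_def numeral_fps_const)
qed

(* Letting n tend to infinity: f_(2s) times the Gaussian binomial [2n, m] is 1 up to order
   min(m, 2n - m), and the summands with |n - m| > T only contribute beyond order T. *)
theorem eq_upto_eta_fps_odd_prod_theta:
  fixes e :: rat
  assumes "e * e = 1" and "s \<ge> 1" and "2 * T \<le> n"
  shows "eq_upto T (eta_fps (2 * s) * odd_prod e s n ^ 2) (theta e s)"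
proof -
  have "eq_upto T (eta_fps (2 * s) * odd_prod e s n ^ 2)
      (\<Sum>m\<le>2 * n. if absdiff n m \<le> T then fps_const (e ^ absdiff n m) * fps_X ^ (s * absdiff n m ^ 2) else 0)"
    unfolding finite_jacobi_triple_product[OF assms(1)] sum_distrib_left
    using assms(2,3) by (intro eq_upto_sum eq_upto_eta_fps_mult_summand) simp_all
  moreover have "eq_upto T (\<Sum>m\<le>2 * n. if absdiff n m \<le> T then fps_const (e ^ absdiff n m) * fps_X ^ (s * absdiff n m ^ 2) else 0)
      (theta e s)"
    using assms(2,3) by (intro eq_upto_sum_absdiff_theta) simp_all
  ultimately show ?thesis
    by (rule eq_upto_trans)
qed

lemma odd_prod_neg_one: "odd_prod (-1) m n = (\<Prod>j<n. 1 - fps_X ^ (m * (2 * j + 1)))"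
proof -
  have "fps_const (-1 :: 'a) = -1"
    by (simp add: fps_eq_iff)
  then show ?thesis
    by (simp add: odd_prod_def)
qed

lemma qpochhammer_double_eq_odd_prod:
  "qpochhammer (fps_X ^ m) (2 * n) = odd_prod (-1) m n * qpochhammer (fps_X ^ (2 * m)) n"
proof (induction n)
  case (Suc n)
  have "2 * Suc n = Suc (Suc (2 * n))"
    by simp
  then have q: "qpochhammer (fps_X ^ m) (2 * Suc n)
      = qpochhammer (fps_X ^ m) (2 * n) * (1 - (fps_X ^ m) ^ Suc (2 * n)) * (1 - (fps_X ^ m) ^ Suc (Suc (2 * n)))"
    by (simp only: qpochhammer_Suc)
  have odd: "(fps_X ^ m) ^ Suc (2 * n) = (fps_X :: 'a fps) ^ (m * (2 * n + 1))"
    by (simp only: power_mult[symmetric] Suc_eq_plus1)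
  have "m * Suc (Suc (2 * n)) = 2 * m * Suc n"
    by (simp add: algebra_simps)
  then have even: "(fps_X ^ m) ^ Suc (Suc (2 * n)) = ((fps_X :: 'a fps) ^ (2 * m)) ^ Suc n"
    by (simp only: power_mult[symmetric])
  show ?case
    unfolding q odd even Suc.IH odd_prod_neg_one
    by (simp only: qpochhammer_Suc prod.lessThan_Suc ac_simps)
qed (simp add: odd_prod_def)

lemma odd_prod_nth_0 [simp]: "s \<ge> 1 \<Longrightarrow> odd_prod e s n $ 0 = 1"
  by (induction n) (simp_all add: odd_prod_def)

lemma eq_upto_odd_prod_neg:
  assumes "m \<ge> 1" and "T \<le> n"
  shows "eq_upto T (odd_prod (-1) m n) (eta_fps m * inverse (eta_fps (2 * m)))"
proof -
  have "qpochhammer (fps_X ^ (2 * m)) n * inverse (qpochhammer (fps_X ^ (2 * m)) n) = (1 :: rat fps)"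
    using assms(1) by (simp add: inverse_mult_eq_1')
  then have "(odd_prod (-1) m n :: rat fps) = qpochhammer (fps_X ^ m) (2 * n) * inverse (qpochhammer (fps_X ^ (2 * m)) n)"
    by (simp add: qpochhammer_double_eq_odd_prod mult.assoc)
  moreover have "eq_upto T (qpochhammer (fps_X ^ m) (2 * n)) (eta_fps m)"
    using eq_upto_eta_fps[OF assms(1), of T "2 * n"] assms(2) by (simp add: eq_upto_sym)
  moreover have "eq_upto T (inverse (qpochhammer (fps_X ^ (2 * m)) n)) (inverse (eta_fps (2 * m)))"
    using eq_upto_eta_fps[of "2 * m" T n] assms by (intro eq_upto_inverse) (simp_all add: eq_upto_sym)
  ultimately show ?thesis
    by (simp add: eq_upto_mult)
qed

lemma eta_fps_mult_inverse [simp]: "eta_fps m * inverse (eta_fps m) = 1"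
  by (simp add: inverse_mult_eq_1')

theorem theta_neg_eq_eta_fps:
  assumes "s \<ge> 1"
  shows "theta (-1) s = eta_fps s ^ 2 * inverse (eta_fps (2 * s))"
proof (rule fps_eq_if_eq_upto)
  fix T
  have "eq_upto T (eta_fps (2 * s) * odd_prod (-1) s (2 * T) ^ 2) (theta (-1) s)"
    using assms by (intro eq_upto_eta_fps_odd_prod_theta) simp_all
  moreover have "eq_upto T (eta_fps (2 * s) * odd_prod (-1) s (2 * T) ^ 2)
      (eta_fps (2 * s) * (eta_fps s * inverse (eta_fps (2 * s))) ^ 2)"
    using assms by (intro eq_upto_mult eq_upto_power eq_upto_refl eq_upto_odd_prod_neg) simp_all
  moreover have "eta_fps (2 * s) * (eta_fps s * inverse (eta_fps (2 * s))) ^ 2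
      = eta_fps s ^ 2 * inverse (eta_fps (2 * s)) * (eta_fps (2 * s) * inverse (eta_fps (2 * s)))"
    by (simp only: power2_eq_square ac_simps)
  ultimately have "eq_upto T (eta_fps (2 * s) * odd_prod (-1) s (2 * T) ^ 2) (eta_fps s ^ 2 * inverse (eta_fps (2 * s)))"
    by simp
  with \<open>eq_upto T _ (theta (-1) s)\<close>
  show "eq_upto T (theta (-1) s) (eta_fps s ^ 2 * inverse (eta_fps (2 * s)))"
    by (rule eq_upto_trans[OF eq_upto_sym])
qed

theorem theta_one_eq_eta_fps:
  "theta 1 1 = eta_fps 2 ^ 5 * inverse (eta_fps 4) ^ 2 * inverse (eta_fps 1) ^ 2"
proof (rule fps_eq_if_eq_upto)
  fix T :: nat
  define n where "n = 2 * T"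
  have factors: "odd_prod 1 1 n * odd_prod (-1) 1 n = (odd_prod (-1) 2 n :: rat fps)"
    unfolding odd_prod_neg_one unfolding odd_prod_def prod.distrib[symmetric]
    by (intro prod.cong refl) (simp add: algebra_simps flip: power_add mult_2)
  have "odd_prod (-1) 2 n * inverse (odd_prod (-1) 1 n)
      = odd_prod 1 1 n * (odd_prod (-1) 1 n * inverse (odd_prod (-1) 1 n :: rat fps))"
    unfolding factors[symmetric] by (simp only: mult.assoc)
  then have "odd_prod 1 1 n = odd_prod (-1) 2 n * inverse (odd_prod (-1) 1 n :: rat fps)"
    by (simp add: inverse_mult_eq_1')
  moreover have "eq_upto T (odd_prod (-1) 2 n * inverse (odd_prod (-1) 1 n))
      (eta_fps 2 * inverse (eta_fps 4) * inverse (eta_fps 1 * inverse (eta_fps 2)))"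
    using eq_upto_odd_prod_neg[of 2 T n] eq_upto_odd_prod_neg[of 1 T n]
    by (intro eq_upto_mult eq_upto_inverse) (simp_all add: n_def)
  ultimately have "eq_upto T (eta_fps 2 * odd_prod 1 1 n ^ 2)
      (eta_fps 2 * (eta_fps 2 * inverse (eta_fps 4) * inverse (eta_fps 1 * inverse (eta_fps 2))) ^ 2)"
    by (intro eq_upto_mult eq_upto_power eq_upto_refl) simp
  moreover have "eta_fps 2 * (eta_fps 2 * inverse (eta_fps 4) * inverse (eta_fps 1 * inverse (eta_fps 2))) ^ 2
      = eta_fps 2 ^ 5 * inverse (eta_fps 4) ^ 2 * inverse (eta_fps 1) ^ 2"
    by (simp add: fps_inverse_mult power2_eq_square eval_nat_numeral ac_simps)
  moreover have "eq_upto T (eta_fps (2 * 1) * odd_prod 1 1 n ^ 2) (theta 1 1)"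
    by (intro eq_upto_eta_fps_odd_prod_theta) (simp_all add: n_def)
  ultimately show "eq_upto T (theta 1 1) (eta_fps 2 ^ 5 * inverse (eta_fps 4) ^ 2 * inverse (eta_fps 1) ^ 2)"
    using eq_upto_trans[OF eq_upto_sym] by simp
qed

lemma overcubic_gf_eq_theta:
  assumes "c \<ge> 1"
  shows "overcubic_gf c = theta 1 1 * inverse (theta (-1) 2) ^ (c + 1)"
proof -
  obtain k where c: "c = k + 1"
    using assms by (cases c) auto
  have regroup: "a4 ^ k * a2 ^ 3 * (i1 ^ 2 * i2 ^ (2 * (k + 1)))
      = a2 ^ 5 * i4 ^ 2 * i1 ^ 2 * (i2 ^ 2 * a4) ^ (k + 2)"
    if "a2 * i2 = 1" and "a4 * i4 = 1" for a2 i2 a4 i4 i1 :: "rat fps"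
  proof -
    have "a2 ^ 5 * i4 ^ 2 * i1 ^ 2 * (i2 ^ 2 * a4) ^ (k + 2)
        = (a4 ^ k * a2 ^ 3 * (i1 ^ 2 * i2 ^ (2 * (k + 1)))) * (a2 * i2) ^ 2 * (a4 * i4) ^ 2"
      by (simp add: power_mult_distrib power_add ac_simps eval_nat_numeral flip: power_mult)
    then show ?thesis
      using that by (simp only: power_one mult_1_right)
  qed
  have inverse_theta: "inverse (theta (-1) 2) = inverse (eta_fps 2) ^ 2 * eta_fps 4"
    by (simp add: theta_neg_eq_eta_fps fps_inverse_mult fps_inverse_power)
  have "c + 1 = k + 2"
    using c by simp
  then have "theta 1 1 * inverse (theta (-1) 2) ^ (c + 1)
      = eta_fps 2 ^ 5 * inverse (eta_fps 4) ^ 2 * inverse (eta_fps 1) ^ 2 * (inverse (eta_fps 2) ^ 2 * eta_fps 4) ^ (k + 2)"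
    unfolding theta_one_eq_eta_fps inverse_theta by (rule arg_cong)
  also have "\<dots> = eta_fps 4 ^ k * eta_fps 2 ^ 3 * (inverse (eta_fps 1) ^ 2 * inverse (eta_fps 2) ^ (2 * (k + 1)))"
    by (rule regroup[symmetric]) simp_all
  also have "\<dots> = overcubic_gf c"
    by (simp add: overcubic_gf_def c fps_inverse_mult fps_inverse_power)
  finally show ?thesis ..
qed

section \<open>Congruences between integral power series\<close>

lemma fps_mult_nth_neq_0:
  fixes f g :: "'a :: comm_semiring_0 fps"
  assumes "(f * g) $ n \<noteq> 0"
  obtains i where "i \<le> n" and "f $ i \<noteq> 0" and "g $ (n - i) \<noteq> 0"
proof -
  obtain i where "i \<in> {0..n}" and "f $ i * g $ (n - i) \<noteq> 0"
    using assms unfolding fps_mult_nth by (rule sum.not_neutral_contains_not_neutral)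
  then show ?thesis
    by (intro that[of i]) auto
qed

lemma fps_inverse_nth_rec:
  fixes f :: "'a :: field fps"
  assumes "t > 0"
  shows "inverse f $ t = - inverse (f $ 0) * (\<Sum>i=1..t. f $ i * inverse f $ (t - i))"
  using assms by (simp add: fps_inverse_def fps_right_inverse_constructor_rec)

definition integral_fps :: "rat fps \<Rightarrow> bool" where
  "integral_fps a \<longleftrightarrow> (\<forall>n. a $ n \<in> \<int>)"

definition multiple_fps :: "int \<Rightarrow> rat fps \<Rightarrow> bool" where
  "multiple_fps M a \<longleftrightarrow> (\<forall>n. a $ n / of_int M \<in> \<int>)"

definition fps_cong :: "int \<Rightarrow> rat fps \<Rightarrow> rat fps \<Rightarrow> bool" where
  "fps_cong M a b \<longleftrightarrow> integral_fps a \<and> integral_fps b \<and> multiple_fps M (a - b)"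

lemma integral_fps_1 [simp]: "integral_fps 1"
  and integral_fps_X_power [simp]: "integral_fps (fps_X ^ k)"
  and integral_fps_of_nat [simp]: "integral_fps (of_nat k)"
  by (auto simp: integral_fps_def fps_of_nat[symmetric])

lemma integral_fps_add: "integral_fps a \<Longrightarrow> integral_fps b \<Longrightarrow> integral_fps (a + b)"
  and integral_fps_diff: "integral_fps a \<Longrightarrow> integral_fps b \<Longrightarrow> integral_fps (a - b)"
  by (auto simp: integral_fps_def)

lemma integral_fps_mult: "integral_fps a \<Longrightarrow> integral_fps b \<Longrightarrow> integral_fps (a * b)"
  unfolding integral_fps_def fps_mult_nth by (auto intro!: Ints_sum Ints_mult)

lemma integral_fps_power: "integral_fps a \<Longrightarrow> integral_fps (a ^ k)"
  by (induction k) (auto intro: integral_fps_mult)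

lemma integral_fps_inverse:
  assumes "integral_fps a" and "a $ 0 = 1"
  shows "integral_fps (inverse a)"
  unfolding integral_fps_def
proof
  fix t
  show "inverse a $ t \<in> \<int>"
  proof (induction t rule: less_induct)
    case (less t)
    show ?case
    proof (cases "t = 0")
      case False
      then have "inverse a $ t = - (\<Sum>i=1..t. a $ i * inverse a $ (t - i))"
        using assms(2) by (simp add: fps_inverse_nth_rec)
      also have "\<dots> \<in> \<int>"
        using assms(1) less False unfolding integral_fps_def by (intro Ints_minus Ints_sum Ints_mult) auto
      finally show ?thesis .
    qed (simp add: assms(2))
  qed
qed

lemma multiple_fps_add: "multiple_fps M a \<Longrightarrow> multiple_fps M b \<Longrightarrow> multiple_fps M (a + b)"
  and multiple_fps_diff: "multiple_fps M a \<Longrightarrow> multiple_fps M b \<Longrightarrow> multiple_fps M (a - b)"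
  by (auto simp: multiple_fps_def add_divide_distrib diff_divide_distrib)

lemma multiple_fps_mult:
  assumes "multiple_fps M a" and "integral_fps b"
  shows "multiple_fps M (a * b)"
  unfolding multiple_fps_def
proof
  fix t
  have "(a * b) $ t / of_int M = (\<Sum>i=0..t. (a $ i / of_int M) * b $ (t - i))"
    by (simp add: fps_mult_nth sum_divide_distrib)
  also have "\<dots> \<in> \<int>"
    using assms unfolding multiple_fps_def integral_fps_def by (intro Ints_sum Ints_mult) auto
  finally show "(a * b) $ t / of_int M \<in> \<int>" .
qed

lemma multiple_fps_mult_left: "integral_fps a \<Longrightarrow> multiple_fps M b \<Longrightarrow> multiple_fps M (a * b)"
  using multiple_fps_mult[of M b a] by (simp add: mult.commute)

lemma multiple_fps_mult_mult:
  assumes "multiple_fps M a" and "multiple_fps N b"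
  shows "multiple_fps (M * N) (a * b)"
  unfolding multiple_fps_def
proof
  fix t
  have "(a * b) $ t / of_int (M * N) = (\<Sum>i=0..t. (a $ i / of_int M) * (b $ (t - i) / of_int N))"
    by (simp add: fps_mult_nth sum_divide_distrib)
  also have "\<dots> \<in> \<int>"
    using assms unfolding multiple_fps_def by (intro Ints_sum Ints_mult) auto
  finally show "(a * b) $ t / of_int (M * N) \<in> \<int>" .
qed

lemma multiple_fps_const_mult: "integral_fps b \<Longrightarrow> multiple_fps M (fps_const (of_int M) * b)"
  by (cases "M = 0") (auto simp: multiple_fps_def integral_fps_def)

lemma fps_cong_refl: "integral_fps a \<Longrightarrow> fps_cong M a a"
  by (simp add: fps_cong_def multiple_fps_def)

lemma fps_cong_sym: "fps_cong M a b \<Longrightarrow> fps_cong M b a"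
  unfolding fps_cong_def using multiple_fps_diff[of M 0 "a - b"] by (simp add: multiple_fps_def)

lemma fps_cong_trans: "fps_cong M a b \<Longrightarrow> fps_cong M b c \<Longrightarrow> fps_cong M a c"
  unfolding fps_cong_def using multiple_fps_add[of M "a - b" "b - c"] by simp

lemma fps_cong_mult:
  assumes "fps_cong M a b" and "fps_cong M c d"
  shows "fps_cong M (a * c) (b * d)"
proof -
  have "a * c - b * d = (a - b) * c + b * (c - d)"
    by (simp add: algebra_simps)
  then show ?thesis
    using assms unfolding fps_cong_def
    by (auto intro: integral_fps_mult multiple_fps_add multiple_fps_mult multiple_fps_mult_left)
qed

lemma fps_cong_power: "fps_cong M a b \<Longrightarrow> fps_cong M (a ^ k) (b ^ k)"
  by (induction k) (auto intro: fps_cong_mult fps_cong_refl)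

lemma fps_cong_inverse:
  assumes "fps_cong M a b" and "a $ 0 = 1" and "b $ 0 = 1"
  shows "fps_cong M (inverse a) (inverse b)"
proof -
  have "inverse a - inverse b = inverse a * (b - a) * inverse b"
    using assms(2,3) by (simp add: algebra_simps inverse_mult_eq_1 inverse_mult_eq_1')
  moreover have "integral_fps (inverse a)" and "integral_fps (inverse b)"
    using assms by (auto simp: fps_cong_def intro: integral_fps_inverse)
  moreover have "multiple_fps M (b - a)"
    using fps_cong_sym[OF assms(1)] by (simp add: fps_cong_def)
  ultimately show ?thesis
    by (simp add: fps_cong_def multiple_fps_mult multiple_fps_mult_left)
qed

definition exponents_dvd :: "nat \<Rightarrow> 'a :: zero fps \<Rightarrow> bool" where
  "exponents_dvd d a \<longleftrightarrow> (\<forall>n. a $ n \<noteq> 0 \<longrightarrow> d dvd n)"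

lemma exponents_dvd_mult:
  fixes a b :: "'a :: comm_semiring_0 fps"
  assumes "exponents_dvd d a" and "exponents_dvd d b"
  shows "exponents_dvd d (a * b)"
  unfolding exponents_dvd_def
proof (intro allI impI)
  fix n assume "(a * b) $ n \<noteq> 0"
  then obtain i where "i \<le> n" and "a $ i \<noteq> 0" and "b $ (n - i) \<noteq> 0"
    by (rule fps_mult_nth_neq_0)
  then have "d dvd i" and "d dvd n - i"
    using assms by (auto simp: exponents_dvd_def)
  then have "d dvd i + (n - i)"
    by (rule dvd_add)
  with \<open>i \<le> n\<close> show "d dvd n"
    by simp
qed

lemma exponents_dvd_1 [simp]: "exponents_dvd d 1"
  by (simp add: exponents_dvd_def)

lemma exponents_dvd_power: "exponents_dvd d a \<Longrightarrow> exponents_dvd d (a ^ k :: 'a :: comm_semiring_1 fps)"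
  by (induction k) (simp_all add: exponents_dvd_mult)

lemma exponents_dvd_inverse:
  fixes a :: "'a :: field fps"
  assumes "exponents_dvd d a"
  shows "exponents_dvd d (inverse a)"
  unfolding exponents_dvd_def
proof (intro allI impI)
  fix t
  show "inverse a $ t \<noteq> 0 \<Longrightarrow> d dvd t"
  proof (induction t rule: less_induct)
    case (less t)
    show ?case
    proof (rule ccontr)
      assume "\<not> d dvd t"
      then have "t > 0"
        by (rule contrapos_np) simp
      have "a $ i * inverse a $ (t - i) = 0" if "i \<in> {1..t}" for i
      proof (cases "a $ i = 0")
        case False
        then have "d dvd i"
          using assms by (simp add: exponents_dvd_def)
        then have "\<not> d dvd t - i"
          using \<open>\<not> d dvd t\<close> that by (metis dvd_add le_add_diff_inverse atLeastAtMost_iff)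
        then show ?thesis
          using less.IH[of "t - i"] that by fastforce
      qed simp
      then have "(\<Sum>i=1..t. a $ i * inverse a $ (t - i)) = 0"
        by (intro sum.neutral ballI)
      then have "inverse a $ t = 0"
        using \<open>t > 0\<close> by (simp add: fps_inverse_nth_rec)
      with less.prems show False ..
    qed
  qed
qed

lemma theta_nth_0 [simp]: "theta e s $ 0 = 1"
  by (simp add: theta_nth)

lemma integral_fps_theta: "e \<in> \<int> \<Longrightarrow> integral_fps (theta e s)"
  by (auto simp: integral_fps_def theta_nth intro!: Ints_add Ints_mult Ints_sum Ints_power)

lemma fps_cong_theta_1: "e \<in> \<int> \<Longrightarrow> fps_cong 2 (theta e s) 1"
  by (auto simp: fps_cong_def multiple_fps_def integral_fps_theta theta_nth intro!: Ints_sum Ints_mult Ints_power)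

lemma theta_nth_neq_0:
  assumes "theta e s $ t \<noteq> 0"
  shows "\<exists>k. t = s * k ^ 2"
proof (cases "t = 0")
  case False
  then have "(\<Sum>d=1..t. if s * d ^ 2 = t then e ^ d else 0) \<noteq> 0"
    using assms by (auto simp: theta_nth)
  then obtain d where "(if s * d ^ 2 = t then e ^ d else 0) \<noteq> 0"
    by (rule sum.not_neutral_contains_not_neutral)
  then show ?thesis
    by (auto split: if_splits)
qed simp

lemma exponents_dvd_theta: "d dvd s \<Longrightarrow> exponents_dvd d (theta e s)"
  unfolding exponents_dvd_def using theta_nth_neq_0 by fastforce

lemma integral_fps_qpochhammer_X_power: "integral_fps (qpochhammer (fps_X ^ m) K)"
  by (induction K) (simp_all add: qpochhammer_Suc integral_fps_mult integral_fps_diff flip: power_mult)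

lemma integral_fps_eta_fps: "integral_fps (eta_fps m)"
  using integral_fps_qpochhammer_X_power by (simp add: integral_fps_def eta_fps_nth)

lemma qpochhammer_cube_cong:
  "fps_cong 3 (qpochhammer (fps_X ^ m) K ^ 3) (qpochhammer (fps_X ^ (3 * m)) K)"
proof (induction K)
  case (Suc K)
  define y where "y = (fps_X :: rat fps) ^ (m * Suc K)"
  have "fps_const (of_int 3) = (3 :: rat fps)"
    by (simp add: numeral_fps_const)
  then have "(1 - y) ^ 3 - (1 - y ^ 3) = fps_const (of_int 3) * (y ^ 2 - y)"
    by (simp add: algebra_simps eval_nat_numeral)
  moreover have "integral_fps y"
    by (simp add: y_def)
  ultimately have "fps_cong 3 ((1 - y) ^ 3) (1 - y ^ 3)"
    unfolding fps_cong_def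
    by (simp add: multiple_fps_const_mult integral_fps_power integral_fps_diff del: of_int_numeral)
  moreover have "(fps_X ^ m) ^ Suc K = y" and "(fps_X ^ (3 * m)) ^ Suc K = y ^ 3"
    unfolding y_def by (simp_all only: power_mult[symmetric] ac_simps)
  ultimately have "fps_cong 3 ((1 - (fps_X ^ m) ^ Suc K) ^ 3) (1 - (fps_X ^ (3 * m)) ^ Suc K)"
    by simp
  with Suc show ?case
    by (simp add: qpochhammer_Suc power_mult_distrib fps_cong_mult)
qed (simp add: fps_cong_refl)

lemma eta_fps_cube_cong:
  assumes "m \<ge> 1"
  shows "fps_cong 3 (eta_fps m ^ 3) (eta_fps (3 * m))"
  unfolding fps_cong_def
proof (intro conjI)
  show "multiple_fps 3 (eta_fps m ^ 3 - eta_fps (3 * m))"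
    unfolding multiple_fps_def
  proof
    fix t
    have "eq_upto t (eta_fps m ^ 3 - eta_fps (3 * m))
        (qpochhammer (fps_X ^ m) t ^ 3 - qpochhammer (fps_X ^ (3 * m)) t)"
      using assms by (intro eq_upto_diff eq_upto_power eq_upto_eta_fps) simp_all
    then have "(eta_fps m ^ 3 - eta_fps (3 * m)) $ t
        = (qpochhammer (fps_X ^ m) t ^ 3 - qpochhammer (fps_X ^ (3 * m)) t) $ t"
      by (simp add: eq_upto_def)
    then show "(eta_fps m ^ 3 - eta_fps (3 * m)) $ t / of_int 3 \<in> \<int>"
      using qpochhammer_cube_cong[of m t] by (simp add: fps_cong_def multiple_fps_def)
  qed
qed (simp_all add: integral_fps_eta_fps integral_fps_power)

lemma theta_neg_cube_cong:
  assumes "s \<ge> 1"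
  shows "fps_cong 3 (theta (-1) s ^ 3) (theta (-1) (3 * s))"
proof -
  have "theta (-1) s ^ 3 = (eta_fps s ^ 3) ^ 2 * inverse (eta_fps (2 * s) ^ 3)"
    using assms by (simp add: theta_neg_eq_eta_fps power_mult_distrib fps_inverse_power flip: power_mult)
  moreover have "theta (-1) (3 * s) = eta_fps (3 * s) ^ 2 * inverse (eta_fps (3 * (2 * s)))"
    using assms by (simp add: theta_neg_eq_eta_fps ac_simps)
  moreover have "fps_cong 3 ((eta_fps s ^ 3) ^ 2) (eta_fps (3 * s) ^ 2)"
    using assms by (intro fps_cong_power eta_fps_cube_cong)
  moreover have "fps_cong 3 (inverse (eta_fps (2 * s) ^ 3)) (inverse (eta_fps (3 * (2 * s))))"
    using assms by (intro fps_cong_inverse eta_fps_cube_cong) (simp_all add: fps_power_zeroth)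
  ultimately show ?thesis
    by (simp only: fps_cong_mult)
qed

lemma inverse_theta_neg_cube_cong:
  assumes "s \<ge> 1"
  shows "fps_cong 3 (inverse (theta (-1) s) ^ 3) (inverse (theta (-1) (3 * s)))"
  using fps_cong_inverse[OF theta_neg_cube_cong[OF assms]]
  by (simp add: fps_inverse_power fps_power_zeroth)

lemma square_mod_9: "(k :: nat) ^ 2 mod 9 \<in> {0, 1, 4, 7}"
proof -
  have "\<forall>r\<in>{..<9 :: nat}. r * r mod 9 \<in> {0, 1, 4, 7}"
    by (simp add: lessThan_nat_numeral)
  moreover have "k ^ 2 mod 9 = (k mod 9) * (k mod 9) mod 9"
    by (simp add: power2_eq_square mod_mult_eq)
  ultimately show ?thesis
    by simp
qed

lemma square_mod_3_neq_2: "(k :: nat) ^ 2 mod 3 \<noteq> 2"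
proof -
  have "k ^ 2 mod 3 = k ^ 2 mod 9 mod 3"
    by (simp add: mod_mod_cancel)
  then show ?thesis
    using square_mod_9[of k] by auto
qed

lemma square_add_six_square_mod_9_neq_3: "((k :: nat) ^ 2 + 6 * l ^ 2) mod 9 \<noteq> 3"
proof -
  have "(k ^ 2 + 6 * l ^ 2) mod 9 = (k ^ 2 mod 9 + 6 * (l ^ 2 mod 9)) mod 9"
    by (metis mod_add_eq mod_add_right_eq mod_mult_right_eq)
  then show ?thesis
    using square_mod_9[of k] square_mod_9[of l] by auto
qed

lemma double_square_mod_9_neq_3: "2 * (k :: nat) ^ 2 mod 9 \<noteq> 3"
proof -
  have "2 * k ^ 2 mod 9 = 2 * (k ^ 2 mod 9) mod 9"
    by (simp add: mod_simps)
  then show ?thesis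
    using square_mod_9[of k] by auto
qed

section \<open>The coefficients modulo 2, 4 and 3\<close>

lemma overcubic_gf_nth_mult_2:
  assumes "c \<ge> 1" and "t \<ge> 1"
  shows "overcubic_gf c $ t / 2 \<in> \<int>"
proof -
  have "fps_cong 2 (inverse (theta (-1) 2)) (inverse 1)"
    by (intro fps_cong_inverse fps_cong_theta_1) simp_all
  then have "fps_cong 2 (theta 1 1 * inverse (theta (-1) 2) ^ (c + 1)) (1 * 1 ^ (c + 1))"
    by (intro fps_cong_mult fps_cong_power fps_cong_theta_1) simp_all
  then have "multiple_fps 2 (overcubic_gf c - 1)"
    by (simp add: fps_cong_def overcubic_gf_eq_theta[OF assms(1)])
  then show ?thesis
    using assms(2) by (auto simp: multiple_fps_def dest: spec[of _ t])
qed

(* With a = A - 1, b = 1/B - 1 and d = B - 1 all even, (1 + b)^k = 1 + k b and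
   b = -d - d b = -d modulo 4. *)
lemma multiple_fps_4_mult_inverse_power:
  assumes "fps_cong 2 A 1" and "fps_cong 2 B 1" and "B $ 0 = 1"
  shows "multiple_fps 4 (A * inverse B ^ k - (A - of_nat k * (B - 1)))"
proof -
  define a b d where "a = A - 1" and "b = inverse B - 1" and "d = B - 1"
  have "fps_cong 2 (inverse B) (inverse 1)"
    using assms by (intro fps_cong_inverse) simp_all
  then have b: "multiple_fps 2 b" and "integral_fps b"
    by (simp_all add: fps_cong_def b_def integral_fps_diff)
  have a: "multiple_fps 2 a" and d: "multiple_fps 2 d" and "integral_fps A"
    using assms by (simp_all add: fps_cong_def a_def d_def)
  have "multiple_fps 4 (x * y)" if "multiple_fps 2 x" and "multiple_fps 2 y" for x y
    using multiple_fps_mult_mult[OF that] by simp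
  note multiple_4 = this
  define D where "D k = (1 + b) ^ k - 1 - of_nat k * b" for k
  have D: "multiple_fps 4 (D k)" for k
  proof (induction k)
    case (Suc k)
    have "D (Suc k) = D k * (1 + b) + of_nat k * (b * b)"
      by (simp add: D_def algebra_simps)
    then show ?case
      using Suc \<open>integral_fps b\<close> multiple_4[OF b b]
      by (simp add: multiple_fps_add multiple_fps_mult multiple_fps_mult_left integral_fps_add)
  qed (simp add: D_def multiple_fps_def)
  have "b + d + d * b = B * inverse B - 1"
    by (simp add: b_def d_def algebra_simps)
  then have "b + d + d * b = 0"
    using assms(3) by (simp add: inverse_mult_eq_1')
  moreover have "A * inverse B ^ k - (A - of_nat k * (B - 1))
      = A * D k + of_nat k * (a * b) - of_nat k * (d * b) + of_nat k * (b + d + d * b)"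
    by (simp add: D_def a_def b_def d_def algebra_simps)
  ultimately show ?thesis
    using D multiple_4[OF a b] multiple_4[OF d b] \<open>integral_fps A\<close>
    by (simp add: multiple_fps_add multiple_fps_diff multiple_fps_mult_left)
qed

lemma overcubic_gf_nth_mult_4:
  assumes "c \<ge> 1" and "theta 1 1 $ t = (0 :: rat)" and "theta (-1) 2 $ t = (0 :: rat)"
  shows "overcubic_gf c $ t / 4 \<in> \<int>"
proof -
  have "t \<noteq> 0"
    using assms(2) by (cases t) auto
  have "multiple_fps 4 (overcubic_gf c - (theta 1 1 - of_nat (c + 1) * (theta (-1) 2 - 1)))"
    unfolding overcubic_gf_eq_theta[OF assms(1)]
    by (intro multiple_fps_4_mult_inverse_power fps_cong_theta_1) simp_all
  moreover have "(theta 1 1 - of_nat (c + 1) * (theta (-1) 2 - 1) :: rat fps) $ t = 0"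
    using assms(2,3) \<open>t \<noteq> 0\<close> by (simp flip: fps_of_nat)
  ultimately show ?thesis
    by (auto simp: multiple_fps_def dest: spec[of _ t])
qed

lemma nth_multiple_if_fps_cong_mult:
  assumes "fps_cong M G (F * S)" and "exponents_dvd d S"
    and "\<And>i. i \<le> t \<Longrightarrow> F $ i \<noteq> 0 \<Longrightarrow> i mod d \<noteq> t mod d"
  shows "G $ t / of_int M \<in> \<int>"
proof -
  have "(F * S) $ t = 0"
  proof (rule ccontr)
    assume "(F * S) $ t \<noteq> 0"
    then obtain i where "i \<le> t" and "F $ i \<noteq> 0" and "S $ (t - i) \<noteq> 0"
      by (rule fps_mult_nth_neq_0)
    then have "t mod d = i mod d"
      using assms(2) by (simp add: exponents_dvd_def mod_eq_dvd_iff_nat)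
    with assms(3)[OF \<open>i \<le> t\<close> \<open>F $ i \<noteq> 0\<close>] show False
      by simp
  qed
  moreover have "(G - F * S) $ t / of_int M \<in> \<int>"
    using assms(1) by (simp add: fps_cong_def multiple_fps_def)
  ultimately show ?thesis
    by simp
qed

lemma integral_fps_inverse_theta: "integral_fps (inverse (theta (-1) s))"
  by (intro integral_fps_inverse integral_fps_theta) simp_all

lemma exponents_dvd_inverse_theta:
  fixes e :: "'a :: field"
  shows "d dvd s \<Longrightarrow> exponents_dvd d (inverse (theta e s))"
  by (intro exponents_dvd_inverse exponents_dvd_theta)

lemma inverse_theta_neg_two_power_9_cong:
  "fps_cong 3 (inverse (theta (-1) 2) ^ 9) (inverse (theta (-1) 18))"
proof -
  have "fps_cong 3 ((inverse (theta (-1) 2) ^ 3) ^ 3) (inverse (theta (-1) (3 * 2)) ^ 3)"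
    by (intro fps_cong_power inverse_theta_neg_cube_cong) simp
  moreover have "fps_cong 3 (inverse (theta (-1) 6) ^ 3) (inverse (theta (-1) (3 * 6)))"
    by (intro inverse_theta_neg_cube_cong) simp
  ultimately show ?thesis
    by (simp add: fps_cong_trans flip: power_mult)
qed

lemma overcubic_gf_3i2_nth_3n2_mult_3: "overcubic_gf (3 * i + 2) $ (3 * n + 2) / 3 \<in> \<int>"
proof (rule nth_multiple_if_fps_cong_mult[where M = 3, simplified])
  have "3 * i + 2 + 1 = 3 * (i + 1)"
    by simp
  moreover have "overcubic_gf (3 * i + 2) = theta 1 1 * inverse (theta (-1) 2) ^ (3 * i + 2 + 1)"
    by (rule overcubic_gf_eq_theta) simp
  ultimately have "overcubic_gf (3 * i + 2) = theta 1 1 * (inverse (theta (-1) 2) ^ 3) ^ (i + 1)"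
    by (simp only: power_add power_mult)
  moreover have "fps_cong 3 (inverse (theta (-1) 2) ^ 3) (inverse (theta (-1) (3 * 2)))"
    by (intro inverse_theta_neg_cube_cong) simp
  ultimately show "fps_cong 3 (overcubic_gf (3 * i + 2)) (theta 1 1 * inverse (theta (-1) 6) ^ (i + 1))"
    by (simp add: fps_cong_mult fps_cong_power fps_cong_refl integral_fps_theta)
  show "exponents_dvd 3 (inverse (theta (-1) 6) ^ (i + 1) :: rat fps)"
    by (intro exponents_dvd_power exponents_dvd_inverse_theta) simp
  fix j
  assume "theta 1 1 $ j \<noteq> (0 :: rat)"
  then obtain k where "j = k ^ 2"
    using theta_nth_neq_0 by fastforce
  moreover have "(3 * n + 2) mod 3 = (2 :: nat)"
    by presburger
  ultimately show "j mod 3 \<noteq> (3 * n + 2) mod 3"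
    using square_mod_3_neq_2[of k] by simp
qed

lemma overcubic_gf_9i8_nth_9n3_mult_3: "overcubic_gf (9 * i + 8) $ (9 * n + 3) / 3 \<in> \<int>"
proof (rule nth_multiple_if_fps_cong_mult[where M = 3, simplified])
  have "9 * i + 8 + 1 = 9 * (i + 1)"
    by simp
  moreover have "overcubic_gf (9 * i + 8) = theta 1 1 * inverse (theta (-1) 2) ^ (9 * i + 8 + 1)"
    by (rule overcubic_gf_eq_theta) simp
  ultimately have "overcubic_gf (9 * i + 8) = theta 1 1 * (inverse (theta (-1) 2) ^ 9) ^ (i + 1)"
    by (simp only: power_add power_mult)
  then show "fps_cong 3 (overcubic_gf (9 * i + 8)) (theta 1 1 * inverse (theta (-1) 18) ^ (i + 1))"
    using inverse_theta_neg_two_power_9_cong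
    by (simp add: fps_cong_mult fps_cong_power fps_cong_refl integral_fps_theta)
  show "exponents_dvd 9 (inverse (theta (-1) 18) ^ (i + 1) :: rat fps)"
    by (intro exponents_dvd_power exponents_dvd_inverse_theta) simp
  fix j
  assume "theta 1 1 $ j \<noteq> (0 :: rat)"
  then obtain k where "j = k ^ 2"
    using theta_nth_neq_0 by fastforce
  moreover have "(9 * n + 3) mod 9 = (3 :: nat)"
    by presburger
  ultimately show "j mod 9 \<noteq> (9 * n + 3) mod 9"
    using square_add_six_square_mod_9_neq_3[of k 0] by simp
qed

lemma overcubic_gf_9i5_nth_9n3_mult_3: "overcubic_gf (9 * i + 5) $ (9 * n + 3) / 3 \<in> \<int>"
proof (rule nth_multiple_if_fps_cong_mult[where M = 3, simplified])
  let ?I = "\<lambda>s. inverse (theta (-1) s) :: rat fps"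
  have "9 * i + 5 + 1 = 9 * i + 3 * 2"
    by simp
  moreover have "overcubic_gf (9 * i + 5) = theta 1 1 * ?I 2 ^ (9 * i + 5 + 1)"
    by (rule overcubic_gf_eq_theta) simp
  ultimately have G: "overcubic_gf (9 * i + 5) = theta 1 1 * ((?I 2 ^ 9) ^ i * (?I 2 ^ 3) ^ 2)"
    by (simp only: power_add power_mult)
  have A: "fps_cong 3 (theta 1 1) (theta 1 1)"
    by (simp add: fps_cong_refl integral_fps_theta)
  have "fps_cong 3 (?I 2 ^ 3) (?I 6)"
    using inverse_theta_neg_cube_cong[of 2] by simp
  then have "fps_cong 3 (overcubic_gf (9 * i + 5)) (theta 1 1 * (?I 18 ^ i * ?I 6 ^ 2))"
    unfolding G
    by (intro fps_cong_mult[OF A] fps_cong_mult fps_cong_power inverse_theta_neg_two_power_9_cong)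
  \<comment> \<open>1/phi(-q^6)^2 = phi(-q^6)/phi(-q^6)^3 is congruent to phi(-q^6)/phi(-q^18)\<close>
  moreover have "?I 6 ^ 2 = ?I 6 ^ 3 * theta (-1) 6"
    by (simp add: power2_eq_square eval_nat_numeral inverse_mult_eq_1 mult.assoc)
  moreover have "fps_cong 3 (?I 6 ^ 3) (?I 18)"
    using inverse_theta_neg_cube_cong[of 6] by simp
  then have "fps_cong 3 (theta 1 1 * (?I 18 ^ i * (?I 6 ^ 3 * theta (-1) 6)))
      (theta 1 1 * (?I 18 ^ i * (?I 18 * theta (-1) 6)))"
    by (intro fps_cong_mult[OF A] fps_cong_mult fps_cong_refl integral_fps_power integral_fps_theta
        integral_fps_inverse_theta Ints_minus Ints_1)
  ultimately have "fps_cong 3 (overcubic_gf (9 * i + 5)) (theta 1 1 * (?I 18 ^ i * (?I 18 * theta (-1) 6)))"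
    by (simp add: fps_cong_trans)
  then show "fps_cong 3 (overcubic_gf (9 * i + 5)) (theta 1 1 * theta (-1) 6 * ?I 18 ^ (i + 1))"
    by (simp add: ac_simps)
  show "exponents_dvd 9 (?I 18 ^ (i + 1))"
    by (intro exponents_dvd_power exponents_dvd_inverse_theta) simp
  fix j
  assume "(theta 1 1 * theta (-1) 6) $ j \<noteq> (0 :: rat)"
  then obtain j' where "j' \<le> j" and "theta 1 1 $ j' \<noteq> (0 :: rat)" and "theta (-1) 6 $ (j - j') \<noteq> (0 :: rat)"
    by (rule fps_mult_nth_neq_0)
  then obtain k l where "j = k ^ 2 + 6 * l ^ 2"
    using theta_nth_neq_0 by (metis le_add_diff_inverse mult_1)
  moreover have "(9 * n + 3) mod 9 = (3 :: nat)"
    by presburger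
  ultimately show "j mod 9 \<noteq> (9 * n + 3) mod 9"
    using square_add_six_square_mod_9_neq_3[of k l] by simp
qed

lemma theta_nth_eq_0_if_mod_9:
  assumes "t mod 9 = 3" and "s = 1 \<or> s = 2"
  shows "theta e s $ t = 0"
proof (rule ccontr)
  assume "theta e s $ t \<noteq> 0"
  then obtain k where "t = s * k ^ 2"
    using theta_nth_neq_0 by blast
  with assms show False
    using square_add_six_square_mod_9_neq_3[of k 0] double_square_mod_9_neq_3[of k] by auto
qed

lemma overcubic_gf_9n3_mult_4: "c \<ge> 1 \<Longrightarrow> overcubic_gf c $ (9 * n + 3) / 4 \<in> \<int>"
  by (intro overcubic_gf_nth_mult_4 theta_nth_eq_0_if_mod_9) presburger+

lemma of_int_mult_if_divide_Ints:
  fixes x :: rat and a b :: int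
  assumes "x / of_int a \<in> \<int>" and "x / of_int b \<in> \<int>"
    and "coprime a b" and "a \<noteq> 0" and "b \<noteq> 0"
  shows "\<exists>k. x = of_int (a * b * k)"
proof -
  obtain u v where "u * a + v * b = 1"
    using bezout_int[of a b] assms(3) by auto
  then have "of_int u * of_int a + of_int v * of_int b = (1 :: rat)"
    by (metis of_int_1 of_int_add of_int_mult)
  then have "x / of_int (a * b) = of_int u * (x / of_int b) + of_int v * (x / of_int a)"
    using assms(4,5) by (simp add: field_simps) (metis distrib_left mult.commute mult_1)
  also have "\<dots> \<in> \<int>"
    using assms(1,2) by (intro Ints_add Ints_mult) simp_all
  finally obtain k where "x / of_int (a * b) = of_int k"
    by (elim Ints_cases)
  then have "x = of_int (a * b * k)"
    using assms(4,5) by (simp add: field_simps)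
  then show ?thesis ..
qed

theorem theorem1p2:
  fixes n i :: nat
  assumes "i \<ge> 1"
  shows "(\<exists>k::int. abar (3 * i + 2) (3 * n + 2) = of_int (6 * k))
       \<and> (\<exists>k::int. abar (9 * i + 5) (9 * n + 3) = of_int (12 * k))
       \<and> (\<exists>k::int. abar (9 * i + 8) (9 * n + 3) = of_int (12 * k))"
proof -
  have mult_6: "\<exists>k. x = of_int (6 * k)" if "x / 2 \<in> \<int>" and "x / 3 \<in> \<int>" for x :: rat
    using of_int_mult_if_divide_Ints[of x 2 3] that by simp
  have mult_12: "\<exists>k. x = of_int (12 * k)" if "x / 4 \<in> \<int>" and "x / 3 \<in> \<int>" for x :: rat
    using of_int_mult_if_divide_Ints[of x 4 3] coprime_add_one_left[of "3 :: int"] that by simp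
  show ?thesis
    unfolding abar_def
    by (intro conjI mult_6 mult_12 overcubic_gf_nth_mult_2 overcubic_gf_9n3_mult_4
        overcubic_gf_3i2_nth_3n2_mult_3 overcubic_gf_9i5_nth_9n3_mult_3 overcubic_gf_9i8_nth_9n3_mult_3) simp_all
qed

end
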